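(* Let $(X,d_X)$ be an extended pseudometric space, $\Delta\subset X$, and $S,T$ multisets of elements of $X$. Then $d^{\Delta,d_X}_\infty(S,T)=\max\{\delta^{\Delta,d_X}_\infty(S,T),\ \delta^{\Delta,d_X}_\infty(T,S)\}.$
   Context: An extended pseudometric is a symmetric function $d_X\colon X\times X\to[0,\infty]$ satisfying the triangle inequality and $d_X(x,x)=0$. A multiset of elements of $X$ is a set together with a map to $X$. For $\epsilon\ge0$, an $\epsilon$-matching between $S$ and $T$ relative to $\Delta$ consists of submultisets $S'\subset S$, $T'\subset T$ such that every $x\in(S\setminus S')\cup(T\setminus T')$ has some $y\in\Delta$ with $d_X(x,y)\le\epsilon$, together with a bijection $f\colon S'\to T'$ with $d_X(x,f(x))\le\epsilon$ for all $x\in S'$. An $\epsilon$-embedding of $S$ into $T$ relative to $\Delta$ consists of a submultiset $S'\subset S$ such that every $x\in S\setminus S'$ has some $y\in\Delta$ with $d_X(x,y)\le\epsilon$, together with an injection $f\colon S'\to T$ with $d_X(x,f(x))\le\epsilon$ for all $x\in S'$. The bottleneck distance is $d^{\Delta,d_X}_\infty(S,T)=\inf\{\epsilon\ge0:\text{an }\epsilon\text{-matching between }S,T\text{ relative to }\Delta\text{ exists}\}$ and the hemidistance is $\delta^{\Delta,d_X}_\infty(S,T)=\inf\{\epsilon\ge0:\text{an }\epsilon\text{-embedding of }S\text{ into }T\text{ relative to }\Delta\text{ exists}\}$ (infimum of the empty set $=\infty$). *)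

theory Defs
  imports "HOL-Library.Extended_Nonnegative_Real"
begin

definition ext_pseudometric :: "('x \<Rightarrow> 'x \<Rightarrow> ennreal) \<Rightarrow> bool" where
  "ext_pseudometric d \<longleftrightarrow> (\<forall>x. d x x = 0) \<and> (\<forall>x y. d x y = d y x)
     \<and> (\<forall>x y z. d x z \<le> d x y + d y z)"

text \<open>A multiset of elements of X is represented by an index set A together with a map
  s from indices to X. Submultisets are subsets of the index set.\<close>

definition eps_matching ::
  "('x \<Rightarrow> 'x \<Rightarrow> ennreal) \<Rightarrow> 'x set \<Rightarrow> real \<Rightarrow> 'a set \<Rightarrow> ('a \<Rightarrow> 'x) \<Rightarrow> 'b set \<Rightarrow> ('b \<Rightarrow> 'x) \<Rightarrow> bool" where
  "eps_matching d \<Delta> \<epsilon> A s B t \<longleftrightarrow>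
     (\<exists>A' B' f. A' \<subseteq> A \<and> B' \<subseteq> B
        \<and> (\<forall>a\<in>A - A'. \<exists>y\<in>\<Delta>. d (s a) y \<le> ennreal \<epsilon>)
        \<and> (\<forall>b\<in>B - B'. \<exists>y\<in>\<Delta>. d (t b) y \<le> ennreal \<epsilon>)
        \<and> bij_betw f A' B'
        \<and> (\<forall>a\<in>A'. d (s a) (t (f a)) \<le> ennreal \<epsilon>))"

definition eps_embedding ::
  "('x \<Rightarrow> 'x \<Rightarrow> ennreal) \<Rightarrow> 'x set \<Rightarrow> real \<Rightarrow> 'a set \<Rightarrow> ('a \<Rightarrow> 'x) \<Rightarrow> 'b set \<Rightarrow> ('b \<Rightarrow> 'x) \<Rightarrow> bool" where
  "eps_embedding d \<Delta> \<epsilon> A s B t \<longleftrightarrow>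
     (\<exists>A' f. A' \<subseteq> A
        \<and> (\<forall>a\<in>A - A'. \<exists>y\<in>\<Delta>. d (s a) y \<le> ennreal \<epsilon>)
        \<and> inj_on f A' \<and> f ` A' \<subseteq> B
        \<and> (\<forall>a\<in>A'. d (s a) (t (f a)) \<le> ennreal \<epsilon>))"

definition bottleneck_dist ::
  "('x \<Rightarrow> 'x \<Rightarrow> ennreal) \<Rightarrow> 'x set \<Rightarrow> 'a set \<Rightarrow> ('a \<Rightarrow> 'x) \<Rightarrow> 'b set \<Rightarrow> ('b \<Rightarrow> 'x) \<Rightarrow> ennreal" where
  "bottleneck_dist d \<Delta> A s B t =
     Inf (ennreal ` {\<epsilon>. \<epsilon> \<ge> 0 \<and> eps_matching d \<Delta> \<epsilon> A s B t})"

definition hemidist ::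
  "('x \<Rightarrow> 'x \<Rightarrow> ennreal) \<Rightarrow> 'x set \<Rightarrow> 'a set \<Rightarrow> ('a \<Rightarrow> 'x) \<Rightarrow> 'b set \<Rightarrow> ('b \<Rightarrow> 'x) \<Rightarrow> ennreal" where
  "hemidist d \<Delta> A s B t =
     Inf (ennreal ` {\<epsilon>. \<epsilon> \<ge> 0 \<and> eps_embedding d \<Delta> \<epsilon> A s B t})"

end

theory Submission
  imports Defs
begin

text \<open>An \<epsilon>-matching is in particular an \<epsilon>-embedding in both directions, so the
  bottleneck distance dominates both hemidistances. Conversely, two \<epsilon>-embeddings
  \<open>f : S' \<rightarrow> T\<close> and \<open>g : T' \<rightarrow> S\<close> are glued into an \<epsilon>-matching by the
  Schroeder-Bernstein construction: on the points of \<open>S\<close> reached from \<open>S - g(T')\<close>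
  by alternately applying \<open>f\<close> and \<open>g\<close> one matches along \<open>f\<close>, everywhere else along
  \<open>g\<^sup>-\<^sup>1\<close>. This matches every point of \<open>S'\<close> and of \<open>T'\<close>, so the unmatched points are
  \<epsilon>-close to \<Delta>. Since embeddings persist when \<epsilon> grows, the infimum over \<epsilon> of the
  conjunction is the maximum of the two infima.\<close>

inductive_set sb_orbit :: "'a set \<Rightarrow> 'a set \<Rightarrow> ('a \<Rightarrow> 'b) \<Rightarrow> 'b set \<Rightarrow> ('b \<Rightarrow> 'a) \<Rightarrow> 'a set"
  for A A' f B' g where
  start: "a \<in> A \<Longrightarrow> a \<notin> g ` B' \<Longrightarrow> a \<in> sb_orbit A A' f B' g"
| step: "a \<in> sb_orbit A A' f B' g \<Longrightarrow> a \<in> A' \<Longrightarrow> f a \<in> B' \<Longrightarrow> g (f a) \<in> sb_orbit A A' f B' g"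

lemma Diff_sb_orbit_subset_image: "A - sb_orbit A A' f B' g \<subseteq> g ` B'"
  by (meson DiffE sb_orbit.start subsetI)

lemma inj_on_sb_glue:
  assumes "A' \<subseteq> A" and f: "inj_on f A'" and g: "inj_on g B'"
  defines "C \<equiv> sb_orbit A A' f B' g"
  shows "inj_on (\<lambda>a. if a \<in> C then f a else inv_into B' g a) (A' \<union> (A - C))"
proof (rule inj_onI)
  have outside: "A - C \<subseteq> g ` B'"
    unfolding C_def by (rule Diff_sb_orbit_subset_image)
  have no_mixed: False if "u \<in> C" "u \<in> A'" "v \<in> A - C" "f u = inv_into B' g v" for u v
  proof -
    have "v \<in> g ` B'" using outside that(3) ..
    then have "f u \<in> B'" "g (f u) = v"
      using that(4) by (auto intro: inv_into_into f_inv_into_f)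
    then have "v \<in> C" using sb_orbit.step that(1,2) unfolding C_def by metis
    with that(3) show False by blast
  qed
  fix u v
  assume u: "u \<in> A' \<union> (A - C)" and v: "v \<in> A' \<union> (A - C)"
    and eq: "(if u \<in> C then f u else inv_into B' g u) = (if v \<in> C then f v else inv_into B' g v)"
  consider "u \<in> C" "v \<in> C" | "u \<notin> C" "v \<notin> C" | "u \<in> C" "v \<notin> C" | "u \<notin> C" "v \<in> C"
    by blast
  then show "u = v"
  proof cases
    case 1
    with u v eq f show ?thesis by (auto dest: inj_onD)
  next
    case 2
    with u v assms(1) have "u \<in> g ` B'" "v \<in> g ` B'" using outside by auto
    with 2 eq show ?thesis by (metis f_inv_into_f)
  next
    case 3
    with u v eq assms(1) have "u \<in> A'" "v \<in> A - C" "f u = inv_into B' g v" by auto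
    with 3 no_mixed show ?thesis by blast
  next
    case 4
    with u v eq assms(1) have "v \<in> A'" "u \<in> A - C" "f v = inv_into B' g u" by auto
    with 4 no_mixed show ?thesis by blast
  qed
qed

lemma partial_injections_glue:
  assumes "A' \<subseteq> A" "inj_on f A'" "f ` A' \<subseteq> B"
    and "B' \<subseteq> B" "inj_on g B'" "g ` B' \<subseteq> A"
  obtains A'' B'' h where "A' \<subseteq> A''" "A'' \<subseteq> A" "B' \<subseteq> B''" "B'' \<subseteq> B" "bij_betw h A'' B''"
    "\<And>a. a \<in> A'' \<Longrightarrow> (a \<in> A' \<and> h a = f a) \<or> (h a \<in> B' \<and> g (h a) = a)"
proof -
  define C where "C = sb_orbit A A' f B' g"
  define h where "h a = (if a \<in> C then f a else inv_into B' g a)" for a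
  define A'' where "A'' = A' \<union> (A - C)"
  have outside: "A - C \<subseteq> g ` B'"
    unfolding C_def by (rule Diff_sb_orbit_subset_image)
  have h_cases: "(a \<in> A' \<and> h a = f a) \<or> (h a \<in> B' \<and> g (h a) = a)" if "a \<in> A''" for a
    using that outside assms(1) unfolding h_def A''_def by (auto intro: inv_into_into f_inv_into_f)
  have "B' \<subseteq> h ` A''"
  proof
    fix b assume b: "b \<in> B'"
    show "b \<in> h ` A''"
    proof (cases "g b \<in> C")
      case False
      then have "g b \<in> A''" "h (g b) = b"
        using b assms(5,6) unfolding A''_def h_def by auto
      then show ?thesis by (metis image_eqI)
    next
      case True
      then show ?thesis unfolding C_def
      proof cases
        case (step a)
        then have "b = f a" using b assms(5) by (auto dest: inj_onD)
        with step show ?thesis unfolding A''_def h_def C_def by auto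
      qed (use b in auto)
    qed
  qed
  moreover have "h ` A'' \<subseteq> B"
  proof
    fix b assume "b \<in> h ` A''"
    then obtain a where "a \<in> A''" "b = h a" by blast
    then show "b \<in> B" using h_cases assms(3,4) by blast
  qed
  moreover have "bij_betw h A'' (h ` A'')"
    using inj_on_sb_glue[OF assms(1,2,5)] unfolding bij_betw_def h_def A''_def C_def by blast
  moreover have "A' \<subseteq> A''" "A'' \<subseteq> A"
    using assms(1) unfolding A''_def by blast+
  ultimately show ?thesis
    using that[of A'' "h ` A''" h] h_cases by blast
qed

lemma eps_matching_imp_embedding:
  "eps_matching d \<Delta> e A s B t \<Longrightarrow> eps_embedding d \<Delta> e A s B t"
  unfolding eps_matching_def eps_embedding_def bij_betw_def by blast

lemma eps_matching_sym:
  assumes d_sym: "\<And>x y. d x y = d y x" and "eps_matching d \<Delta> e A s B t"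
  shows "eps_matching d \<Delta> e B t A s"
proof -
  obtain A' B' f where A': "A' \<subseteq> A" "\<forall>a\<in>A - A'. \<exists>y\<in>\<Delta>. d (s a) y \<le> ennreal e"
    and B': "B' \<subseteq> B" "\<forall>b\<in>B - B'. \<exists>y\<in>\<Delta>. d (t b) y \<le> ennreal e"
    and f: "bij_betw f A' B'" "\<forall>a\<in>A'. d (s a) (t (f a)) \<le> ennreal e"
    using assms(2) unfolding eps_matching_def by blast
  have "d (t b) (s (inv_into A' f b)) \<le> ennreal e" if "b \<in> B'" for b
  proof -
    have "b \<in> f ` A'" using that f(1) by (simp add: bij_betw_def)
    then have "inv_into A' f b \<in> A'" "f (inv_into A' f b) = b"
      by (simp_all add: inv_into_into f_inv_into_f)
    then have "d (s (inv_into A' f b)) (t b) \<le> ennreal e" using f(2) by metis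
    then show ?thesis by (simp add: d_sym)
  qed
  then show ?thesis
    unfolding eps_matching_def using A' B' bij_betw_inv_into[OF f(1)] by blast
qed

lemma eps_embeddings_imp_matching:
  assumes d_sym: "\<And>x y. d x y = d y x"
    and "eps_embedding d \<Delta> e A s B t" "eps_embedding d \<Delta> e B t A s"
  shows "eps_matching d \<Delta> e A s B t"
proof -
  obtain A' f where A': "A' \<subseteq> A" "\<forall>a\<in>A - A'. \<exists>y\<in>\<Delta>. d (s a) y \<le> ennreal e"
    and f: "inj_on f A'" "f ` A' \<subseteq> B" "\<forall>a\<in>A'. d (s a) (t (f a)) \<le> ennreal e"
    using assms(2) unfolding eps_embedding_def by blast
  obtain B' g where B': "B' \<subseteq> B" "\<forall>b\<in>B - B'. \<exists>y\<in>\<Delta>. d (t b) y \<le> ennreal e"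
    and g: "inj_on g B'" "g ` B' \<subseteq> A" "\<forall>b\<in>B'. d (t b) (s (g b)) \<le> ennreal e"
    using assms(3) unfolding eps_embedding_def by blast
  obtain A'' B'' h where glue: "A' \<subseteq> A''" "A'' \<subseteq> A" "B' \<subseteq> B''" "B'' \<subseteq> B" "bij_betw h A'' B''"
    and h_cases: "\<And>a. a \<in> A'' \<Longrightarrow> (a \<in> A' \<and> h a = f a) \<or> (h a \<in> B' \<and> g (h a) = a)"
    using partial_injections_glue[OF A'(1) f(1,2) B'(1) g(1,2)] by blast
  have "d (s a) (t (h a)) \<le> ennreal e" if "a \<in> A''" for a
    using h_cases[OF that]
  proof
    assume "a \<in> A' \<and> h a = f a"
    then show ?thesis using f(3) by simp
  next
    assume "h a \<in> B' \<and> g (h a) = a"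
    then have "d (t (h a)) (s a) \<le> ennreal e" using g(3) by metis
    then show ?thesis by (simp add: d_sym)
  qed
  moreover have "\<forall>a\<in>A - A''. \<exists>y\<in>\<Delta>. d (s a) y \<le> ennreal e"
    and "\<forall>b\<in>B - B''. \<exists>y\<in>\<Delta>. d (t b) y \<le> ennreal e"
    using glue(1,3) A'(2) B'(2) by blast+
  ultimately show ?thesis
    unfolding eps_matching_def using glue(2,4,5) by blast
qed

lemma eps_matching_iff_embeddings:
  assumes "\<And>x y. d x y = d y x"
  shows "eps_matching d \<Delta> e A s B t \<longleftrightarrow>
    eps_embedding d \<Delta> e A s B t \<and> eps_embedding d \<Delta> e B t A s"
proof
  assume m: "eps_matching d \<Delta> e A s B t"
  show "eps_embedding d \<Delta> e A s B t \<and> eps_embedding d \<Delta> e B t A s"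
    using eps_matching_imp_embedding[OF m]
      eps_matching_imp_embedding[OF eps_matching_sym[of d, OF assms m]] by blast
qed (use eps_embeddings_imp_matching[of d, OF assms] in blast)

lemma eps_embedding_mono:
  "eps_embedding d \<Delta> e A s B t \<Longrightarrow> e \<le> e' \<Longrightarrow> eps_embedding d \<Delta> e' A s B t"
  unfolding eps_embedding_def by (meson ennreal_leI order_trans)

lemma Inf_ennreal_image_Int_upward_closed:
  fixes S T :: "real set"
  assumes S: "\<And>x y. x \<in> S \<Longrightarrow> x \<le> y \<Longrightarrow> y \<in> S"
    and T: "\<And>x y. x \<in> T \<Longrightarrow> x \<le> y \<Longrightarrow> y \<in> T"
  shows "Inf (ennreal ` (S \<inter> T)) = max (Inf (ennreal ` S)) (Inf (ennreal ` T))"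
proof (rule antisym)
  show "Inf (ennreal ` (S \<inter> T)) \<le> max (Inf (ennreal ` S)) (Inf (ennreal ` T))"
  proof (rule dense_ge)
    fix y assume "max (Inf (ennreal ` S)) (Inf (ennreal ` T)) < y"
    then obtain x1 x2 where "x1 \<in> S" "ennreal x1 < y" "x2 \<in> T" "ennreal x2 < y"
      by (auto simp: Inf_less_iff)
    then have "max x1 x2 \<in> S \<inter> T" "ennreal (max x1 x2) < y"
      using S T by (auto simp: max_def)
    then have "Inf (ennreal ` (S \<inter> T)) < y"
      by (meson Inf_lower image_eqI le_less_trans)
    then show "Inf (ennreal ` (S \<inter> T)) \<le> y" by simp
  qed
qed (auto intro: Inf_superset_mono)

theorem proposition7p2:
  fixes d :: "'x \<Rightarrow> 'x \<Rightarrow> ennreal" and \<Delta> :: "'x set"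
    and A :: "'a set" and s :: "'a \<Rightarrow> 'x" and B :: "'b set" and t :: "'b \<Rightarrow> 'x"
  assumes "ext_pseudometric d"
  shows "bottleneck_dist d \<Delta> A s B t = max (hemidist d \<Delta> A s B t) (hemidist d \<Delta> B t A s)"
proof -
  have d_sym: "\<And>x y. d x y = d y x" using assms unfolding ext_pseudometric_def by blast
  let ?E = "\<lambda>A s B t. {\<epsilon>::real. \<epsilon> \<ge> 0 \<and> eps_embedding d \<Delta> \<epsilon> A s B t}"
  have matching_eq: "{\<epsilon>. \<epsilon> \<ge> 0 \<and> eps_matching d \<Delta> \<epsilon> A s B t} = ?E A s B t \<inter> ?E B t A s"
    using eps_matching_iff_embeddings[of d, OF d_sym] by blast
  have "\<And>x y. x \<in> ?E A s B t \<Longrightarrow> x \<le> y \<Longrightarrow> y \<in> ?E A s B t"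
    and "\<And>x y. x \<in> ?E B t A s \<Longrightarrow> x \<le> y \<Longrightarrow> y \<in> ?E B t A s"
    using eps_embedding_mono by fastforce+
  then show ?thesis
    unfolding bottleneck_dist_def hemidist_def matching_eq by (rule Inf_ennreal_image_Int_upward_closed)
qed

end
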